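(* Every eaco is an existential doctrine.
   Context: A doctrine is a pair $(\mathcal{C},P)$, $\mathcal{C}$ a category with finite products, $P:\mathcal{C}^{op}\to\mathbf{Pos}$ a functor, $f^*=P(f)$; primary: each $P(A)$ has binary meets $\wedge$ preserved by each $f^*$. Elementary: primary and for every $A$ there is $\delta_A\in P(A\times A)$ such that for every $X$ the assignment $\psi\mapsto\langle\pi_1,\pi_2\rangle^*\psi\wedge\langle\pi_2,\pi_3\rangle^*\delta_A$ ($\pi_i$ the projections of $X\times A\times A$) is a left adjoint $P(X\times A)\to P(X\times A\times A)$ to $(id_X\times\Delta_A)^*$. Graph of $f:X\to A$: $\mathcal{G}(f)=(f\times id_A)^*\delta_A\in P(X\times A)$. Stable initial object: initial $0$ with $X\times0\cong0$ for all $X$. AC: for every $A$ not a stable initial object and every $\Gamma$, $\pi_\Gamma^*$ ($\pi_\Gamma:\Gamma\times A\to\Gamma$) has a left adjoint $\Sigma_{\pi_\Gamma}$ and for every $\psi\in P(\Gamma\times A)$ there is a chosen $\epsilon_\psi:\Gamma\to A$ with $\Sigma_{\pi_\Gamma}\psi=\langle id_\Gamma,\epsilon_\psi\rangle^*\psi$ (also used with factors swapped). Co-comprehension: every $P(A)$ has a bottom and for each $\alpha$ there is $\lceil\alpha\rceil:\{\alpha\}^o\to A$ with $\lceil\alpha\rceil^*\alpha=\bot$, universal (unique factorization) among $f$ with $f^*\alpha=\bot$; full if $\lceil\beta\rceil$ factoring through $\lceil\alpha\rceil$ implies $\alpha\le\beta$. An eaco is an elementary doctrine with full co-comprehension satisfying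 AC such that for every $f:X\to A$ and $\alpha\in P(A)$: $f^*\langle\epsilon_{\mathcal{G}(\lceil\alpha\rceil)},id_A\rangle^*\mathcal{G}(\lceil\alpha\rceil)=\langle\epsilon_{\mathcal{G}(\lceil f^*\alpha\rceil)},id_X\rangle^*\mathcal{G}(\lceil f^*\alpha\rceil)$ (with $\epsilon_{\mathcal{G}(\lceil\alpha\rceil)}:A\to\{\alpha\}^o$ the AC witness for the projection $\{\alpha\}^o\times A\to A$). Existential: for every product projection $f$, $f^*$ has a left adjoint $\Sigma_f$ satisfying Beck–Chevalley ($h^*\Sigma_f\gamma=\Sigma_gk^*\gamma$ for every pullback square $h\circ g=f\circ k$) and Frobenius reciprocity $\Sigma_f(\alpha\wedge f^*\beta)=\beta\wedge\Sigma_f\alpha$. *)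

theory Defs
  imports Main
begin

text \<open>Arrows carry domain and codomain; cmp g f is the composite g o f.\<close>
record ('o,'m) cat =
  Ob  :: "'o set"
  Ar  :: "'m set"
  dom :: "'m \<Rightarrow> 'o"
  cod :: "'m \<Rightarrow> 'o"
  idm :: "'o \<Rightarrow> 'm"
  cmp :: "'m \<Rightarrow> 'm \<Rightarrow> 'm"

record ('o,'m) pcat = "('o,'m) cat" +
  prd  :: "'o \<Rightarrow> 'o \<Rightarrow> 'o"
  pr1  :: "'o \<Rightarrow> 'o \<Rightarrow> 'm"
  pr2  :: "'o \<Rightarrow> 'o \<Rightarrow> 'm"
  tup  :: "'m \<Rightarrow> 'm \<Rightarrow> 'm"
  trm  :: "'o"
  bang :: "'o \<Rightarrow> 'm"

text \<open>A doctrine: a category with finite products plus a functor P : C^op -> Pos,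
  given by carriers Pc A, orders le A and reindexing rei f = f^*.\<close>
record ('o,'m,'p) doctrine = "('o,'m) pcat" +
  Pc  :: "'o \<Rightarrow> 'p set"
  le  :: "'o \<Rightarrow> 'p \<Rightarrow> 'p \<Rightarrow> bool"
  rei :: "'m \<Rightarrow> 'p \<Rightarrow> 'p"

definition hom :: "('o,'m,'z) cat_scheme \<Rightarrow> 'o \<Rightarrow> 'o \<Rightarrow> 'm set" where
  "hom C X Y = {f \<in> Ar C. dom C f = X \<and> cod C f = Y}"

definition category :: "('o,'m,'z) cat_scheme \<Rightarrow> bool" where
  "category C \<longleftrightarrow>
     (\<forall>f\<in>Ar C. dom C f \<in> Ob C \<and> cod C f \<in> Ob C) \<and>
     (\<forall>X\<in>Ob C. idm C X \<in> hom C X X) \<and>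
     (\<forall>f\<in>Ar C. \<forall>g\<in>Ar C. cod C f = dom C g \<longrightarrow> cmp C g f \<in> hom C (dom C f) (cod C g)) \<and>
     (\<forall>f\<in>Ar C. cmp C (idm C (cod C f)) f = f \<and> cmp C f (idm C (dom C f)) = f) \<and>
     (\<forall>f\<in>Ar C. \<forall>g\<in>Ar C. \<forall>h\<in>Ar C. cod C f = dom C g \<longrightarrow> cod C g = dom C h \<longrightarrow>
         cmp C h (cmp C g f) = cmp C (cmp C h g) f)"

definition has_finite_products :: "('o,'m,'z) pcat_scheme \<Rightarrow> bool" where
  "has_finite_products C \<longleftrightarrow> category C \<and>
     trm C \<in> Ob C \<and>
     (\<forall>X\<in>Ob C. bang C X \<in> hom C X (trm C) \<and> (\<forall>f\<in>hom C X (trm C). f = bang C X)) \<and>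
     (\<forall>A\<in>Ob C. \<forall>B\<in>Ob C. prd C A B \<in> Ob C \<and>
        pr1 C A B \<in> hom C (prd C A B) A \<and> pr2 C A B \<in> hom C (prd C A B) B \<and>
        (\<forall>Z\<in>Ob C. \<forall>f\<in>hom C Z A. \<forall>g\<in>hom C Z B.
            tup C f g \<in> hom C Z (prd C A B) \<and>
            cmp C (pr1 C A B) (tup C f g) = f \<and> cmp C (pr2 C A B) (tup C f g) = g \<and>
            (\<forall>h\<in>hom C Z (prd C A B). cmp C (pr1 C A B) h = f \<and> cmp C (pr2 C A B) h = g
                 \<longrightarrow> h = tup C f g)))"

definition iso_objs :: "('o,'m,'z) cat_scheme \<Rightarrow> 'o \<Rightarrow> 'o \<Rightarrow> bool" where
  "iso_objs C X Y \<longleftrightarrow> (\<exists>f\<in>hom C X Y. \<exists>g\<in>hom C Y X. cmp C g f = idm C X \<and> cmp C f g = idm C Y)"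

definition stable_initial :: "('o,'m,'z) pcat_scheme \<Rightarrow> 'o \<Rightarrow> bool" where
  "stable_initial C Z \<longleftrightarrow> Z \<in> Ob C \<and> (\<forall>X\<in>Ob C. \<exists>!u. u \<in> hom C Z X) \<and>
     (\<forall>X\<in>Ob C. iso_objs C (prd C X Z) Z)"

definition is_pullback :: "('o,'m,'z) cat_scheme \<Rightarrow> 'm \<Rightarrow> 'm \<Rightarrow> 'm \<Rightarrow> 'm \<Rightarrow> bool" where
  \<comment> \<open>the square  h o g = f o k  with g : W -> X, k : W -> Z, h : X -> Y, f : Z -> Y is a pullback\<close>
  "is_pullback C h g f k \<longleftrightarrow> h \<in> Ar C \<and> g \<in> Ar C \<and> f \<in> Ar C \<and> k \<in> Ar C \<and>
     dom C h = cod C g \<and> dom C f = cod C k \<and> dom C g = dom C k \<and> cod C h = cod C f \<and>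
     cmp C h g = cmp C f k \<and>
     (\<forall>V\<in>Ob C. \<forall>u\<in>hom C V (cod C g). \<forall>v\<in>hom C V (cod C k). cmp C h u = cmp C f v \<longrightarrow>
        (\<exists>!w. w \<in> hom C V (dom C g) \<and> cmp C g w = u \<and> cmp C k w = v))"

definition doctrine :: "('o,'m,'p,'z) doctrine_scheme \<Rightarrow> bool" where
  "doctrine D \<longleftrightarrow> has_finite_products D \<and>
     (\<forall>A\<in>Ob D. (\<forall>\<alpha>\<in>Pc D A. le D A \<alpha> \<alpha>) \<and>
        (\<forall>\<alpha>\<in>Pc D A. \<forall>\<beta>\<in>Pc D A. le D A \<alpha> \<beta> \<and> le D A \<beta> \<alpha> \<longrightarrow> \<alpha> = \<beta>) \<and>
        (\<forall>\<alpha>\<in>Pc D A. \<forall>\<beta>\<in>Pc D A. \<forall>\<gamma>\<in>Pc D A. le D A \<alpha> \<beta> \<and> le D A \<beta> \<gamma> \<longrightarrow> le D A \<alpha> \<gamma>)) \<and>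
     (\<forall>f\<in>Ar D. (\<forall>\<alpha>\<in>Pc D (cod D f). rei D f \<alpha> \<in> Pc D (dom D f)) \<and>
        (\<forall>\<alpha>\<in>Pc D (cod D f). \<forall>\<beta>\<in>Pc D (cod D f).
            le D (cod D f) \<alpha> \<beta> \<longrightarrow> le D (dom D f) (rei D f \<alpha>) (rei D f \<beta>))) \<and>
     (\<forall>A\<in>Ob D. \<forall>\<alpha>\<in>Pc D A. rei D (idm D A) \<alpha> = \<alpha>) \<and>
     (\<forall>f\<in>Ar D. \<forall>g\<in>Ar D. cod D f = dom D g \<longrightarrow>
        (\<forall>\<alpha>\<in>Pc D (cod D g). rei D (cmp D g f) \<alpha> = rei D f (rei D g \<alpha>)))"

definition primary_with :: "('o,'m,'p,'z) doctrine_scheme \<Rightarrow> ('o \<Rightarrow> 'p \<Rightarrow> 'p \<Rightarrow> 'p) \<Rightarrow> bool" where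
  "primary_with D mt \<longleftrightarrow> doctrine D \<and>
     (\<forall>A\<in>Ob D. \<forall>\<alpha>\<in>Pc D A. \<forall>\<beta>\<in>Pc D A. mt A \<alpha> \<beta> \<in> Pc D A \<and>
        le D A (mt A \<alpha> \<beta>) \<alpha> \<and> le D A (mt A \<alpha> \<beta>) \<beta> \<and>
        (\<forall>\<gamma>\<in>Pc D A. le D A \<gamma> \<alpha> \<and> le D A \<gamma> \<beta> \<longrightarrow> le D A \<gamma> (mt A \<alpha> \<beta>))) \<and>
     (\<forall>f\<in>Ar D. \<forall>\<alpha>\<in>Pc D (cod D f). \<forall>\<beta>\<in>Pc D (cod D f).
        rei D f (mt (cod D f) \<alpha> \<beta>) = mt (dom D f) (rei D f \<alpha>) (rei D f \<beta>))"

text \<open>Elementary doctrine, with dl A = delta_A; X x A x A is read as X x (A x A).\<close>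
definition elementary_with ::
  "('o,'m,'p,'z) doctrine_scheme \<Rightarrow> ('o \<Rightarrow> 'p \<Rightarrow> 'p \<Rightarrow> 'p) \<Rightarrow> ('o \<Rightarrow> 'p) \<Rightarrow> bool" where
  "elementary_with D mt dl \<longleftrightarrow> primary_with D mt \<and>
     (\<forall>A\<in>Ob D. dl A \<in> Pc D (prd D A A) \<and>
       (\<forall>X\<in>Ob D.
          let XAA = prd D X (prd D A A);
              p1 = pr1 D X (prd D A A);
              p2 = cmp D (pr1 D A A) (pr2 D X (prd D A A));
              p3 = cmp D (pr2 D A A) (pr2 D X (prd D A A));
              idD = tup D (cmp D (idm D X) (pr1 D X A))
                          (cmp D (tup D (idm D A) (idm D A)) (pr2 D X A))
          in \<forall>\<psi>\<in>Pc D (prd D X A). \<forall>\<phi>\<in>Pc D XAA.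
               le D XAA (mt XAA (rei D (tup D p1 p2) \<psi>) (rei D (tup D p2 p3) (dl A))) \<phi>
                 \<longleftrightarrow> le D (prd D X A) \<psi> (rei D idD \<phi>)))"

definition graph :: "('o,'m,'p,'z) doctrine_scheme \<Rightarrow> ('o \<Rightarrow> 'p) \<Rightarrow> 'm \<Rightarrow> 'p" where
  "graph D dl f = rei D (tup D (cmp D f (pr1 D (dom D f) (cod D f)))
                               (cmp D (idm D (cod D f)) (pr2 D (dom D f) (cod D f)))) (dl (cod D f))"

definition left_adjoint :: "('o,'m,'p,'z) doctrine_scheme \<Rightarrow> 'm \<Rightarrow> ('p \<Rightarrow> 'p) \<Rightarrow> bool" where
  "left_adjoint D f L \<longleftrightarrow> (\<forall>\<alpha>\<in>Pc D (dom D f). L \<alpha> \<in> Pc D (cod D f) \<and>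
     (\<forall>\<beta>\<in>Pc D (cod D f). le D (cod D f) (L \<alpha>) \<beta> \<longleftrightarrow> le D (dom D f) \<alpha> (rei D f \<beta>)))"

definition AC_with :: "('o,'m,'p,'z) doctrine_scheme \<Rightarrow>
   ('o \<Rightarrow> 'o \<Rightarrow> 'p \<Rightarrow> 'p) \<Rightarrow> ('o \<Rightarrow> 'o \<Rightarrow> 'p \<Rightarrow> 'p) \<Rightarrow>
   ('o \<Rightarrow> 'o \<Rightarrow> 'p \<Rightarrow> 'm) \<Rightarrow> ('o \<Rightarrow> 'o \<Rightarrow> 'p \<Rightarrow> 'm) \<Rightarrow> bool" where
  "AC_with D Sg1 Sg2 e1 e2 \<longleftrightarrow>
     (\<forall>A\<in>Ob D. \<not> stable_initial D A \<longrightarrow> (\<forall>\<Gamma>\<in>Ob D.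
        left_adjoint D (pr1 D \<Gamma> A) (Sg1 \<Gamma> A) \<and>
        (\<forall>\<psi>\<in>Pc D (prd D \<Gamma> A). e1 \<Gamma> A \<psi> \<in> hom D \<Gamma> A \<and>
            Sg1 \<Gamma> A \<psi> = rei D (tup D (idm D \<Gamma>) (e1 \<Gamma> A \<psi>)) \<psi>) \<and>
        left_adjoint D (pr2 D A \<Gamma>) (Sg2 A \<Gamma>) \<and>
        (\<forall>\<psi>\<in>Pc D (prd D A \<Gamma>). e2 A \<Gamma> \<psi> \<in> hom D \<Gamma> A \<and>
            Sg2 A \<Gamma> \<psi> = rei D (tup D (e2 A \<Gamma> \<psi>) (idm D \<Gamma>)) \<psi>)))"

text \<open>Co-comprehension: bt A bottom of P(A), co A alpha = {alpha}^o, cc A alpha = ceil alpha.\<close>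
definition cocomp_with :: "('o,'m,'p,'z) doctrine_scheme \<Rightarrow> ('o \<Rightarrow> 'p) \<Rightarrow>
   ('o \<Rightarrow> 'p \<Rightarrow> 'o) \<Rightarrow> ('o \<Rightarrow> 'p \<Rightarrow> 'm) \<Rightarrow> bool" where
  "cocomp_with D bt co cc \<longleftrightarrow>
     (\<forall>A\<in>Ob D. bt A \<in> Pc D A \<and> (\<forall>\<alpha>\<in>Pc D A. le D A (bt A) \<alpha>)) \<and>
     (\<forall>A\<in>Ob D. \<forall>\<alpha>\<in>Pc D A. co A \<alpha> \<in> Ob D \<and> cc A \<alpha> \<in> hom D (co A \<alpha>) A \<and>
        rei D (cc A \<alpha>) \<alpha> = bt (co A \<alpha>) \<and>
        (\<forall>Y\<in>Ob D. \<forall>f\<in>hom D Y A. rei D f \<alpha> = bt Y \<longrightarrow>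
            (\<exists>!g. g \<in> hom D Y (co A \<alpha>) \<and> cmp D (cc A \<alpha>) g = f)))"

definition full_cocomp :: "('o,'m,'p,'z) doctrine_scheme \<Rightarrow>
   ('o \<Rightarrow> 'p \<Rightarrow> 'o) \<Rightarrow> ('o \<Rightarrow> 'p \<Rightarrow> 'm) \<Rightarrow> bool" where
  "full_cocomp D co cc \<longleftrightarrow> (\<forall>A\<in>Ob D. \<forall>\<alpha>\<in>Pc D A. \<forall>\<beta>\<in>Pc D A.
     (\<exists>g\<in>hom D (co A \<beta>) (co A \<alpha>). cmp D (cc A \<alpha>) g = cc A \<beta>) \<longrightarrow> le D A \<alpha> \<beta>)"

definition eaco :: "('o,'m,'p,'z) doctrine_scheme \<Rightarrow> bool" where
  "eaco D \<longleftrightarrow> (\<exists>mt dl bt co cc Sg1 Sg2 e1 e2.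
     elementary_with D mt dl \<and> cocomp_with D bt co cc \<and> full_cocomp D co cc \<and>
     AC_with D Sg1 Sg2 e1 e2 \<and>
     (\<forall>X\<in>Ob D. \<forall>A\<in>Ob D. \<forall>f\<in>hom D X A. \<forall>\<alpha>\<in>Pc D A.
        let O1 = co A \<alpha>; c1 = cc A \<alpha>;
            O2 = co X (rei D f \<alpha>); c2 = cc X (rei D f \<alpha>)
        in \<not> stable_initial D O1 \<and> \<not> stable_initial D O2 \<longrightarrow>
           rei D f (rei D (tup D (e2 O1 A (graph D dl c1)) (idm D A)) (graph D dl c1))
             = rei D (tup D (e2 O2 X (graph D dl c2)) (idm D X)) (graph D dl c2)))"

definition is_proj :: "('o,'m,'z) pcat_scheme \<Rightarrow> 'm \<Rightarrow> bool" where
  "is_proj C f \<longleftrightarrow> (\<exists>A\<in>Ob C. \<exists>B\<in>Ob C. f = pr1 C A B \<or> f = pr2 C A B)"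

definition existential :: "('o,'m,'p,'z) doctrine_scheme \<Rightarrow> bool" where
  "existential D \<longleftrightarrow> (\<exists>mt Sg. primary_with D mt \<and>
     (\<forall>f. is_proj D f \<longrightarrow> left_adjoint D f (Sg f)) \<and>
     (\<forall>f g h k. is_proj D f \<and> is_proj D g \<and> is_pullback D h g f k \<longrightarrow>
        (\<forall>\<gamma>\<in>Pc D (dom D f). rei D h (Sg f \<gamma>) = Sg g (rei D k \<gamma>))) \<and>
     (\<forall>f. is_proj D f \<longrightarrow> (\<forall>\<alpha>\<in>Pc D (dom D f). \<forall>\<beta>\<in>Pc D (cod D f).
        Sg f (mt (dom D f) \<alpha> (rei D f \<beta>)) = mt (cod D f) \<beta> (Sg f \<alpha>))))"

end

theory Submission
  imports Defs
begin

text \<open>Left adjoints along projections come from AC: \<open>\<Sigma>\<close> along \<open>\<Gamma> \<times> A \<rightarrow> \<Gamma>\<close> is reindexing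
  along a section \<open>\<langle>id, \<epsilon>\<rangle>\<close>. When a factor is a stable initial object the domain of the
  projection has the one-point fibre \<open>{bt}\<close> (by full co-comprehension), and \<open>\<Sigma>\<close> is constantly
  bottom. For adjoints of these two kinds, Beck--Chevalley and Frobenius follow from
  functoriality of reindexing once one knows that reindexing preserves bottom. That is where
  the eaco condition enters: applied to \<open>pr2 : X \<times> \<Gamma> \<rightarrow> \<Gamma>\<close> and \<open>bt \<Gamma>\<close> it produces an
  endomorphism of \<open>X \<times> \<Gamma>\<close> that is internally equal to the identity and maps \<open>pr2\<^sup>* (bt \<Gamma>)\<close>
  below bottom.\<close>

locale product_category =
  fixes D :: "('o,'m,'p,'z) doctrine_scheme"
  assumes finite_products: "has_finite_products D"
begin

lemma category: "category D"
  using finite_products by (simp add: has_finite_products_def)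

lemma hom_dom: "f \<in> hom D X Y \<Longrightarrow> dom D f = X"
  by (simp add: hom_def)

lemma hom_cod: "f \<in> hom D X Y \<Longrightarrow> cod D f = Y"
  by (simp add: hom_def)

lemma hom_dom_Ob: "f \<in> hom D X Y \<Longrightarrow> X \<in> Ob D"
  using category by (auto simp: category_def hom_def)

lemma hom_cod_Ob: "f \<in> hom D X Y \<Longrightarrow> Y \<in> Ob D"
  using category by (auto simp: category_def hom_def)

lemma id_hom: "X \<in> Ob D \<Longrightarrow> idm D X \<in> hom D X X"
  using category by (auto simp: category_def)

lemma comp_hom: "f \<in> hom D X Y \<Longrightarrow> g \<in> hom D Y Z \<Longrightarrow> cmp D g f \<in> hom D X Z"
  using category unfolding category_def hom_def by auto

lemma comp_id_left: "f \<in> hom D X Y \<Longrightarrow> cmp D (idm D Y) f = f"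
  using category unfolding category_def hom_def by auto

lemma comp_id_right: "f \<in> hom D X Y \<Longrightarrow> cmp D f (idm D X) = f"
  using category unfolding category_def hom_def by auto

lemma comp_assoc:
  "f \<in> hom D X Y \<Longrightarrow> g \<in> hom D Y Z \<Longrightarrow> h \<in> hom D Z W \<Longrightarrow>
   cmp D h (cmp D g f) = cmp D (cmp D h g) f"
  using category unfolding category_def hom_def by auto

lemma prd_Ob: "A \<in> Ob D \<Longrightarrow> B \<in> Ob D \<Longrightarrow> prd D A B \<in> Ob D"
  using finite_products by (simp add: has_finite_products_def)

lemma pr1_hom: "A \<in> Ob D \<Longrightarrow> B \<in> Ob D \<Longrightarrow> pr1 D A B \<in> hom D (prd D A B) A"
  using finite_products by (simp add: has_finite_products_def)

lemma pr2_hom: "A \<in> Ob D \<Longrightarrow> B \<in> Ob D \<Longrightarrow> pr2 D A B \<in> hom D (prd D A B) B"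
  using finite_products by (simp add: has_finite_products_def)

lemma tup_props:
  assumes "f \<in> hom D Z A" "g \<in> hom D Z B"
  shows "tup D f g \<in> hom D Z (prd D A B) \<and>
    cmp D (pr1 D A B) (tup D f g) = f \<and> cmp D (pr2 D A B) (tup D f g) = g \<and>
    (\<forall>h\<in>hom D Z (prd D A B). cmp D (pr1 D A B) h = f \<and> cmp D (pr2 D A B) h = g \<longrightarrow> h = tup D f g)"
  using finite_products assms hom_dom_Ob[OF assms(1)] hom_cod_Ob[OF assms(1)] hom_cod_Ob[OF assms(2)]
  by (simp add: has_finite_products_def)

lemma tup_hom: "f \<in> hom D Z A \<Longrightarrow> g \<in> hom D Z B \<Longrightarrow> tup D f g \<in> hom D Z (prd D A B)"
  using tup_props by blast

lemma pr1_tup: "f \<in> hom D Z A \<Longrightarrow> g \<in> hom D Z B \<Longrightarrow> cmp D (pr1 D A B) (tup D f g) = f"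
  using tup_props by blast

lemma pr2_tup: "f \<in> hom D Z A \<Longrightarrow> g \<in> hom D Z B \<Longrightarrow> cmp D (pr2 D A B) (tup D f g) = g"
  using tup_props by blast

lemma tup_unique:
  "f \<in> hom D Z A \<Longrightarrow> g \<in> hom D Z B \<Longrightarrow> h \<in> hom D Z (prd D A B) \<Longrightarrow>
   cmp D (pr1 D A B) h = f \<Longrightarrow> cmp D (pr2 D A B) h = g \<Longrightarrow> h = tup D f g"
  using tup_props by blast

lemma tup_comp:
  assumes f: "f \<in> hom D Z A" and g: "g \<in> hom D Z B" and h: "h \<in> hom D V Z"
  shows "cmp D (tup D f g) h = tup D (cmp D f h) (cmp D g h)"
proof (rule tup_unique)
  have AB: "A \<in> Ob D" "B \<in> Ob D" using f g hom_cod_Ob by auto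
  have t: "tup D f g \<in> hom D Z (prd D A B)" using f g by (rule tup_hom)
  show "cmp D f h \<in> hom D V A" using h f by (rule comp_hom)
  show "cmp D g h \<in> hom D V B" using h g by (rule comp_hom)
  show "cmp D (tup D f g) h \<in> hom D V (prd D A B)" using h t by (rule comp_hom)
  show "cmp D (pr1 D A B) (cmp D (tup D f g) h) = cmp D f h"
    using comp_assoc[OF h t pr1_hom[OF AB]] pr1_tup[OF f g] by simp
  show "cmp D (pr2 D A B) (cmp D (tup D f g) h) = cmp D g h"
    using comp_assoc[OF h t pr2_hom[OF AB]] pr2_tup[OF f g] by simp
qed

definition diag :: "'o \<Rightarrow> 'm" where
  "diag A = tup D (idm D A) (idm D A)"

lemma diag_hom: "A \<in> Ob D \<Longrightarrow> diag A \<in> hom D A (prd D A A)"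
  unfolding diag_def by (intro tup_hom id_hom)

lemma diag_comp: assumes f: "f \<in> hom D Z A" shows "cmp D (diag A) f = tup D f f"
proof -
  have "A \<in> Ob D" using f by (rule hom_cod_Ob)
  then show ?thesis unfolding diag_def using tup_comp[OF id_hom id_hom f] comp_id_left[OF f] by simp
qed

lemma pullback_section:
  assumes pb: "is_pullback D h g f k"
    and s: "s \<in> hom D (cod D f) (dom D f)" "cmp D f s = idm D (cod D f)"
  obtains w where "w \<in> hom D (cod D g) (dom D g)" "cmp D g w = idm D (cod D g)"
    "cmp D k w = cmp D s h"
proof -
  have h: "h \<in> hom D (cod D g) (cod D f)" and f: "f \<in> hom D (dom D f) (cod D f)"
    and cod_k: "cod D k = dom D f"
    using pb by (auto simp: is_pullback_def hom_def)
  have X: "cod D g \<in> Ob D" using h by (rule hom_dom_Ob)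
  have "cmp D h (idm D (cod D g)) = cmp D f (cmp D s h)"
    using comp_assoc[OF h s(1) f] s(2) comp_id_left[OF h] comp_id_right[OF h] by simp
  then have "\<exists>!w. w \<in> hom D (cod D g) (dom D g) \<and> cmp D g w = idm D (cod D g) \<and> cmp D k w = cmp D s h"
    using pb X id_hom[OF X] comp_hom[OF h s(1)] unfolding is_pullback_def cod_k by blast
  then show ?thesis using that by blast
qed

definition maps_to_initial :: "'o \<Rightarrow> bool" where
  "maps_to_initial W \<longleftrightarrow> (\<exists>Z w. stable_initial D Z \<and> w \<in> hom D W Z)"

lemma stable_initial_maps_to_initial: "stable_initial D Z \<Longrightarrow> maps_to_initial Z"
  unfolding maps_to_initial_def using id_hom by (auto simp: stable_initial_def)

lemma maps_to_initial_comp: "v \<in> hom D V W \<Longrightarrow> maps_to_initial W \<Longrightarrow> maps_to_initial V"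
  unfolding maps_to_initial_def using comp_hom by blast

text \<open>If \<open>w : W \<rightarrow> Z\<close> with \<open>Z\<close> stable initial, then \<open>W\<close> is a retract of \<open>W \<times> Z \<cong> Z\<close>,
  so it is initial too.\<close>

lemma maps_to_initial_unique_hom:
  assumes W: "maps_to_initial W" and Y: "Y \<in> Ob D"
  shows "\<exists>!u. u \<in> hom D W Y"
proof -
  obtain Z w where Z: "stable_initial D Z" and w: "w \<in> hom D W Z"
    using W unfolding maps_to_initial_def by blast
  have WZ: "W \<in> Ob D" "Z \<in> Ob D" using w hom_dom_Ob hom_cod_Ob by auto
  have Z_initial: "\<exists>!u. u \<in> hom D Z V" if "V \<in> Ob D" for V
    using Z that unfolding stable_initial_def by blast
  obtain f g where f: "f \<in> hom D (prd D W Z) Z" and g: "g \<in> hom D Z (prd D W Z)"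
    and gf: "cmp D g f = idm D (prd D W Z)"
    using Z WZ(1) unfolding stable_initial_def iso_objs_def by blast
  have i: "idm D W \<in> hom D W W" using id_hom[OF WZ(1)] .
  have s: "tup D (idm D W) w \<in> hom D W (prd D W Z)" using i w by (rule tup_hom)
  have q1: "pr1 D W Z \<in> hom D (prd D W Z) W" using pr1_hom[OF WZ] .
  have retract: "cmp D a (cmp D (pr1 D W Z) (tup D (idm D W) w)) = a" if a: "a \<in> hom D W Y" for a
    using pr1_tup[OF i w] comp_id_right[OF a] by simp
  have "a = b" if a: "a \<in> hom D W Y" and b: "b \<in> hom D W Y" for a b
  proof -
    have aq: "cmp D a (pr1 D W Z) \<in> hom D (prd D W Z) Y" using comp_hom[OF q1 a] .
    have bq: "cmp D b (pr1 D W Z) \<in> hom D (prd D W Z) Y" using comp_hom[OF q1 b] .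
    have "cmp D (cmp D a (pr1 D W Z)) g = cmp D (cmp D b (pr1 D W Z)) g"
      using Z_initial[OF Y] comp_hom[OF g aq] comp_hom[OF g bq] by blast
    then have "cmp D (cmp D (cmp D a (pr1 D W Z)) g) f = cmp D (cmp D (cmp D b (pr1 D W Z)) g) f"
      by simp
    then have "cmp D a (pr1 D W Z) = cmp D b (pr1 D W Z)"
      using comp_assoc[OF f g aq] comp_assoc[OF f g bq] gf comp_id_right[OF aq] comp_id_right[OF bq]
      by simp
    then show ?thesis
      using retract[OF a] retract[OF b] comp_assoc[OF s q1 a] comp_assoc[OF s q1 b] by simp
  qed
  moreover obtain u where "u \<in> hom D Z Y" using Z_initial[OF Y] by blast
  then have "cmp D (cmp D u f) (tup D (idm D W) w) \<in> hom D W Y"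
    by (intro comp_hom[OF s] comp_hom[OF f])
  ultimately show ?thesis by blast
qed

end

locale elementary_doctrine = product_category D for D :: "('o,'m,'p,'z) doctrine_scheme" +
  fixes mt :: "'o \<Rightarrow> 'p \<Rightarrow> 'p \<Rightarrow> 'p" and dl :: "'o \<Rightarrow> 'p"
  assumes elementary: "elementary_with D mt dl"
begin

lemma primary: "primary_with D mt"
  using elementary by (simp add: elementary_with_def)

lemma doctrine: "doctrine D"
  using primary by (simp add: primary_with_def)

lemma le_refl: "A \<in> Ob D \<Longrightarrow> a \<in> Pc D A \<Longrightarrow> le D A a a"
  using doctrine unfolding doctrine_def by (elim conjE) meson

lemma le_antisym:
  "A \<in> Ob D \<Longrightarrow> a \<in> Pc D A \<Longrightarrow> b \<in> Pc D A \<Longrightarrow> le D A a b \<Longrightarrow> le D A b a \<Longrightarrow> a = b"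
  using doctrine unfolding doctrine_def by (elim conjE) meson

lemma le_trans:
  "A \<in> Ob D \<Longrightarrow> a \<in> Pc D A \<Longrightarrow> b \<in> Pc D A \<Longrightarrow> c \<in> Pc D A \<Longrightarrow>
   le D A a b \<Longrightarrow> le D A b c \<Longrightarrow> le D A a c"
  using doctrine unfolding doctrine_def by (elim conjE) meson

lemma rei_Pc: "f \<in> hom D X Y \<Longrightarrow> a \<in> Pc D Y \<Longrightarrow> rei D f a \<in> Pc D X"
  using doctrine unfolding doctrine_def hom_def by auto

lemma rei_mono:
  "f \<in> hom D X Y \<Longrightarrow> a \<in> Pc D Y \<Longrightarrow> b \<in> Pc D Y \<Longrightarrow> le D Y a b \<Longrightarrow>
   le D X (rei D f a) (rei D f b)"
  using doctrine unfolding doctrine_def hom_def by auto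

lemma rei_id: "A \<in> Ob D \<Longrightarrow> a \<in> Pc D A \<Longrightarrow> rei D (idm D A) a = a"
  using doctrine unfolding doctrine_def by (elim conjE) meson

lemma rei_comp:
  "f \<in> hom D X Y \<Longrightarrow> g \<in> hom D Y Z \<Longrightarrow> a \<in> Pc D Z \<Longrightarrow>
   rei D (cmp D g f) a = rei D f (rei D g a)"
  using doctrine unfolding doctrine_def hom_def by auto

lemma mt_Pc: "A \<in> Ob D \<Longrightarrow> a \<in> Pc D A \<Longrightarrow> b \<in> Pc D A \<Longrightarrow> mt A a b \<in> Pc D A"
  using primary unfolding primary_with_def by (elim conjE) meson

lemma mt_le1: "A \<in> Ob D \<Longrightarrow> a \<in> Pc D A \<Longrightarrow> b \<in> Pc D A \<Longrightarrow> le D A (mt A a b) a"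
  using primary unfolding primary_with_def by (elim conjE) meson

lemma mt_le2: "A \<in> Ob D \<Longrightarrow> a \<in> Pc D A \<Longrightarrow> b \<in> Pc D A \<Longrightarrow> le D A (mt A a b) b"
  using primary unfolding primary_with_def by (elim conjE) meson

lemma mt_glb:
  "A \<in> Ob D \<Longrightarrow> a \<in> Pc D A \<Longrightarrow> b \<in> Pc D A \<Longrightarrow> c \<in> Pc D A \<Longrightarrow>
   le D A c a \<Longrightarrow> le D A c b \<Longrightarrow> le D A c (mt A a b)"
  using primary unfolding primary_with_def by (elim conjE) meson

lemma rei_mt:
  "f \<in> hom D X Y \<Longrightarrow> a \<in> Pc D Y \<Longrightarrow> b \<in> Pc D Y \<Longrightarrow>
   rei D f (mt Y a b) = mt X (rei D f a) (rei D f b)"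
  using primary unfolding primary_with_def hom_def by auto

lemma dl_Pc: "A \<in> Ob D \<Longrightarrow> dl A \<in> Pc D (prd D A A)"
  using elementary unfolding elementary_with_def by (elim conjE) meson

definition prj1 :: "'o \<Rightarrow> 'o \<Rightarrow> 'm" where
  "prj1 X A = pr1 D X (prd D A A)"

definition prj2 :: "'o \<Rightarrow> 'o \<Rightarrow> 'm" where
  "prj2 X A = cmp D (pr1 D A A) (pr2 D X (prd D A A))"

definition prj3 :: "'o \<Rightarrow> 'o \<Rightarrow> 'm" where
  "prj3 X A = cmp D (pr2 D A A) (pr2 D X (prd D A A))"

definition id_times_diag :: "'o \<Rightarrow> 'o \<Rightarrow> 'm" where
  "id_times_diag X A = tup D (cmp D (idm D X) (pr1 D X A)) (cmp D (diag A) (pr2 D X A))"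

lemma elementary_iff:
  assumes "X \<in> Ob D" "A \<in> Ob D" "\<psi> \<in> Pc D (prd D X A)" "\<phi> \<in> Pc D (prd D X (prd D A A))"
  shows "le D (prd D X (prd D A A))
           (mt (prd D X (prd D A A)) (rei D (tup D (prj1 X A) (prj2 X A)) \<psi>)
              (rei D (tup D (prj2 X A) (prj3 X A)) (dl A))) \<phi>
         \<longleftrightarrow> le D (prd D X A) \<psi> (rei D (id_times_diag X A) \<phi>)"
  using elementary assms
  unfolding elementary_with_def Let_def prj1_def prj2_def prj3_def id_times_diag_def diag_def
  by (elim conjE) meson

lemma prj_hom:
  assumes "X \<in> Ob D" "A \<in> Ob D"
  shows "prj1 X A \<in> hom D (prd D X (prd D A A)) X"
    and "prj2 X A \<in> hom D (prd D X (prd D A A)) A"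
    and "prj3 X A \<in> hom D (prd D X (prd D A A)) A"
  unfolding prj1_def prj2_def prj3_def using assms
  by (auto intro!: comp_hom pr1_hom pr2_hom prd_Ob)

lemma prj_tup:
  assumes w: "w \<in> hom D Z X" and u: "u \<in> hom D Z A" and v: "v \<in> hom D Z A"
  shows "cmp D (prj1 X A) (tup D w (tup D u v)) = w"
    and "cmp D (prj2 X A) (tup D w (tup D u v)) = u"
    and "cmp D (prj3 X A) (tup D w (tup D u v)) = v"
proof -
  have XA: "X \<in> Ob D" "A \<in> Ob D" using w u hom_cod_Ob by auto
  have uv: "tup D u v \<in> hom D Z (prd D A A)" using u v by (rule tup_hom)
  note q2 = pr2_hom[OF XA(1) prd_Ob[OF XA(2) XA(2)]]
  show "cmp D (prj1 X A) (tup D w (tup D u v)) = w"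
    unfolding prj1_def using pr1_tup[OF w uv] .
  show "cmp D (prj2 X A) (tup D w (tup D u v)) = u"
    unfolding prj2_def using comp_assoc[OF tup_hom[OF w uv] q2 pr1_hom[OF XA(2) XA(2)]]
      pr2_tup[OF w uv] pr1_tup[OF u v] by simp
  show "cmp D (prj3 X A) (tup D w (tup D u v)) = v"
    unfolding prj3_def using comp_assoc[OF tup_hom[OF w uv] q2 pr2_hom[OF XA(2) XA(2)]]
      pr2_tup[OF w uv] pr2_tup[OF u v] by simp
qed

lemma tup_prj_comp:
  assumes w: "w \<in> hom D Z X" and u: "u \<in> hom D Z A" and v: "v \<in> hom D Z A"
  shows "cmp D (tup D (prj1 X A) (prj2 X A)) (tup D w (tup D u v)) = tup D w u"
    and "cmp D (tup D (prj2 X A) (prj3 X A)) (tup D w (tup D u v)) = tup D u v"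
    and "cmp D (tup D (prj3 X A) (prj2 X A)) (tup D w (tup D u v)) = tup D v u"
proof -
  have XA: "X \<in> Ob D" "A \<in> Ob D" using w u hom_cod_Ob by auto
  have t: "tup D w (tup D u v) \<in> hom D Z (prd D X (prd D A A))" using w u v by (intro tup_hom)
  note p = prj_hom[OF XA]
  show "cmp D (tup D (prj1 X A) (prj2 X A)) (tup D w (tup D u v)) = tup D w u"
    using tup_comp[OF p(1) p(2) t] prj_tup[OF w u v] by simp
  show "cmp D (tup D (prj2 X A) (prj3 X A)) (tup D w (tup D u v)) = tup D u v"
    using tup_comp[OF p(2) p(3) t] prj_tup[OF w u v] by simp
  show "cmp D (tup D (prj3 X A) (prj2 X A)) (tup D w (tup D u v)) = tup D v u"
    using tup_comp[OF p(3) p(2) t] prj_tup[OF w u v] by simp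
qed

lemma id_times_diag_eq:
  assumes "X \<in> Ob D" "A \<in> Ob D"
  shows "id_times_diag X A = tup D (pr1 D X A) (tup D (pr2 D X A) (pr2 D X A))"
  unfolding id_times_diag_def
  using comp_id_left[OF pr1_hom[OF assms]] diag_comp[OF pr2_hom[OF assms]] by simp

lemma id_times_diag_hom:
  assumes "X \<in> Ob D" "A \<in> Ob D"
  shows "id_times_diag X A \<in> hom D (prd D X A) (prd D X (prd D A A))"
  unfolding id_times_diag_eq[OF assms] using assms by (intro tup_hom pr1_hom pr2_hom)

lemma rei_id_times_diag:
  assumes X: "X \<in> Ob D" and A: "A \<in> Ob D" and g: "g \<in> hom D (prd D X (prd D A A)) Y"
    and \<phi>: "\<phi> \<in> Pc D Y"
  shows "rei D (id_times_diag X A) (rei D g \<phi>)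
    = rei D (cmp D g (tup D (pr1 D X A) (tup D (pr2 D X A) (pr2 D X A)))) \<phi>"
  using rei_comp[OF id_times_diag_hom[OF X A] g \<phi>] id_times_diag_eq[OF X A] by simp

text \<open>Substitution for the internal equality \<open>dl B\<close>: the elementary adjunction instantiated
  along \<open>\<langle>w, u, v\<rangle>\<close>.\<close>

lemma eq_elim:
  assumes w: "w \<in> hom D Z X" and u: "u \<in> hom D Z B" and v: "v \<in> hom D Z B"
    and \<psi>: "\<psi> \<in> Pc D (prd D X B)" and \<phi>: "\<phi> \<in> Pc D (prd D X (prd D B B))"
    and le: "le D (prd D X B) \<psi> (rei D (id_times_diag X B) \<phi>)"
  shows "le D Z (mt Z (rei D (tup D w u) \<psi>) (rei D (tup D u v) (dl B)))
           (rei D (tup D w (tup D u v)) \<phi>)"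
proof -
  have XB: "X \<in> Ob D" "B \<in> Ob D" using w u hom_cod_Ob by auto
  let ?XBB = "prd D X (prd D B B)"
  have XBB: "?XBB \<in> Ob D" using XB by (intro prd_Ob)
  have t: "tup D w (tup D u v) \<in> hom D Z ?XBB" using w u v by (intro tup_hom)
  have h12: "tup D (prj1 X B) (prj2 X B) \<in> hom D ?XBB (prd D X B)"
    and h23: "tup D (prj2 X B) (prj3 X B) \<in> hom D ?XBB (prd D B B)"
    using prj_hom[OF XB] by (auto intro: tup_hom)
  have a: "rei D (tup D (prj1 X B) (prj2 X B)) \<psi> \<in> Pc D ?XBB" using rei_Pc[OF h12 \<psi>] .
  have b: "rei D (tup D (prj2 X B) (prj3 X B)) (dl B) \<in> Pc D ?XBB"
    using rei_Pc[OF h23 dl_Pc[OF XB(2)]] .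
  have "le D ?XBB (mt ?XBB (rei D (tup D (prj1 X B) (prj2 X B)) \<psi>)
      (rei D (tup D (prj2 X B) (prj3 X B)) (dl B))) \<phi>"
    using elementary_iff[OF XB \<psi> \<phi>] le by blast
  from rei_mono[OF t mt_Pc[OF XBB a b] \<phi> this]
  show ?thesis
    using rei_mt[OF t a b] rei_comp[OF t h12 \<psi>] rei_comp[OF t h23 dl_Pc[OF XB(2)]]
      tup_prj_comp[OF w u v] by simp
qed

definition truth :: "'o \<Rightarrow> 'p" where
  "truth A = rei D (diag A) (dl A)"

lemma truth_Pc: "A \<in> Ob D \<Longrightarrow> truth A \<in> Pc D A"
  unfolding truth_def by (rule rei_Pc[OF diag_hom dl_Pc])

lemma le_rei_pr2_truth:
  assumes XA: "X \<in> Ob D" "A \<in> Ob D" and \<psi>: "\<psi> \<in> Pc D (prd D X A)"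
  shows "le D (prd D X A) \<psi> (rei D (pr2 D X A) (truth A))"
proof -
  let ?XAA = "prd D X (prd D A A)"
  have XAA: "?XAA \<in> Ob D" using XA by (intro prd_Ob)
  have h12: "tup D (prj1 X A) (prj2 X A) \<in> hom D ?XAA (prd D X A)"
    and h23: "tup D (prj2 X A) (prj3 X A) \<in> hom D ?XAA (prd D A A)"
    using prj_hom[OF XA] by (auto intro: tup_hom)
  have a: "rei D (tup D (prj1 X A) (prj2 X A)) \<psi> \<in> Pc D ?XAA" using rei_Pc[OF h12 \<psi>] .
  have \<phi>: "rei D (tup D (prj2 X A) (prj3 X A)) (dl A) \<in> Pc D ?XAA"
    using rei_Pc[OF h23 dl_Pc[OF XA(2)]] .
  have q1: "pr1 D X A \<in> hom D (prd D X A) X" and q2: "pr2 D X A \<in> hom D (prd D X A) A"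
    using XA by (auto intro: pr1_hom pr2_hom)
  have "le D (prd D X A) \<psi> (rei D (id_times_diag X A) (rei D (tup D (prj2 X A) (prj3 X A)) (dl A)))"
    using elementary_iff[OF XA \<psi> \<phi>] mt_le2[OF XAA a \<phi>] by blast
  moreover have "rei D (id_times_diag X A) (rei D (tup D (prj2 X A) (prj3 X A)) (dl A))
      = rei D (pr2 D X A) (truth A)"
    using rei_id_times_diag[OF XA h23 dl_Pc[OF XA(2)]] tup_prj_comp(2)[OF q1 q2 q2]
      diag_comp[OF q2] rei_comp[OF q2 diag_hom[OF XA(2)] dl_Pc[OF XA(2)]]
    unfolding truth_def by simp
  ultimately show ?thesis by simp
qed

lemma le_truth:
  assumes A: "A \<in> Ob D" and a: "a \<in> Pc D A"
  shows "le D A a (truth A)"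
proof -
  have q1: "pr1 D A A \<in> hom D (prd D A A) A" and q2: "pr2 D A A \<in> hom D (prd D A A) A"
    using A by (auto intro: pr1_hom pr2_hom)
  have i: "idm D A \<in> hom D A A" using id_hom[OF A] .
  have "le D (prd D A A) (rei D (pr1 D A A) a) (rei D (pr2 D A A) (truth A))"
    using le_rei_pr2_truth[OF A A rei_Pc[OF q1 a]] .
  from rei_mono[OF diag_hom[OF A] rei_Pc[OF q1 a] rei_Pc[OF q2 truth_Pc[OF A]] this]
  show ?thesis
    using rei_comp[OF diag_hom[OF A] q1 a] rei_comp[OF diag_hom[OF A] q2 truth_Pc[OF A]]
      pr1_tup[OF i i] pr2_tup[OF i i] rei_id[OF A a] rei_id[OF A truth_Pc[OF A]]
    unfolding diag_def by simp
qed

lemma eq_subst: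
  assumes u: "u \<in> hom D Z B" and v: "v \<in> hom D Z B" and \<beta>: "\<beta> \<in> Pc D B"
  shows "le D Z (mt Z (rei D u \<beta>) (rei D (tup D u v) (dl B))) (rei D v \<beta>)"
proof -
  have ZB: "Z \<in> Ob D" "B \<in> Ob D" using u hom_dom_Ob hom_cod_Ob by auto
  have i: "idm D Z \<in> hom D Z Z" using id_hom[OF ZB(1)] .
  have q1: "pr1 D Z B \<in> hom D (prd D Z B) Z" and q2: "pr2 D Z B \<in> hom D (prd D Z B) B"
    using ZB by (auto intro: pr1_hom pr2_hom)
  note p3 = prj_hom(3)[OF ZB]
  have \<psi>: "rei D (pr2 D Z B) \<beta> \<in> Pc D (prd D Z B)" using rei_Pc[OF q2 \<beta>] .
  have "rei D (id_times_diag Z B) (rei D (prj3 Z B) \<beta>) = rei D (pr2 D Z B) \<beta>"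
    unfolding rei_id_times_diag[OF ZB p3 \<beta>] prj_tup(3)[OF q1 q2 q2] ..
  then have "le D (prd D Z B) (rei D (pr2 D Z B) \<beta>) (rei D (id_times_diag Z B) (rei D (prj3 Z B) \<beta>))"
    using le_refl[OF prd_Ob[OF ZB] \<psi>] by simp
  from eq_elim[OF i u v \<psi> rei_Pc[OF p3 \<beta>] this]
  show ?thesis
    using rei_comp[OF tup_hom[OF i u] q2 \<beta>] pr2_tup[OF i u]
      rei_comp[OF tup_hom[OF i tup_hom[OF u v]] p3 \<beta>] prj_tup(3)[OF i u v] by simp
qed

lemma eq_sym:
  assumes u: "u \<in> hom D Z B" and v: "v \<in> hom D Z B"
    and uv: "le D Z (truth Z) (rei D (tup D u v) (dl B))"
  shows "le D Z (truth Z) (rei D (tup D v u) (dl B))"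
proof -
  have ZB: "Z \<in> Ob D" "B \<in> Ob D" using u hom_dom_Ob hom_cod_Ob by auto
  have i: "idm D Z \<in> hom D Z Z" using id_hom[OF ZB(1)] .
  have q1: "pr1 D Z B \<in> hom D (prd D Z B) Z" and q2: "pr2 D Z B \<in> hom D (prd D Z B) B"
    using ZB by (auto intro: pr1_hom pr2_hom)
  have h32: "tup D (prj3 Z B) (prj2 Z B) \<in> hom D (prd D Z (prd D B B)) (prd D B B)"
    using prj_hom[OF ZB] by (intro tup_hom)
  have t: "tup D (idm D Z) (tup D u v) \<in> hom D Z (prd D Z (prd D B B))"
    using i u v by (intro tup_hom)
  have \<psi>: "rei D (pr1 D Z B) (truth Z) \<in> Pc D (prd D Z B)" using rei_Pc[OF q1 truth_Pc[OF ZB(1)]] .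
  have "rei D (id_times_diag Z B) (rei D (tup D (prj3 Z B) (prj2 Z B)) (dl B))
      = rei D (pr2 D Z B) (truth B)"
    using rei_id_times_diag[OF ZB h32 dl_Pc[OF ZB(2)]] tup_prj_comp(3)[OF q1 q2 q2]
      diag_comp[OF q2] rei_comp[OF q2 diag_hom[OF ZB(2)] dl_Pc[OF ZB(2)]]
    unfolding truth_def by simp
  then have "le D (prd D Z B) (rei D (pr1 D Z B) (truth Z))
      (rei D (id_times_diag Z B) (rei D (tup D (prj3 Z B) (prj2 Z B)) (dl B)))"
    using le_rei_pr2_truth[OF ZB \<psi>] by simp
  from eq_elim[OF i u v \<psi> rei_Pc[OF h32 dl_Pc[OF ZB(2)]] this]
  have sym: "le D Z (mt Z (truth Z) (rei D (tup D u v) (dl B))) (rei D (tup D v u) (dl B))"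
    using rei_comp[OF tup_hom[OF i u] q1 truth_Pc[OF ZB(1)]] pr1_tup[OF i u]
      rei_id[OF ZB(1) truth_Pc[OF ZB(1)]] rei_comp[OF t h32 dl_Pc[OF ZB(2)]]
      tup_prj_comp(3)[OF i u v] by simp
  have uvP: "rei D (tup D u v) (dl B) \<in> Pc D Z" using rei_Pc[OF tup_hom[OF u v] dl_Pc[OF ZB(2)]] .
  have vuP: "rei D (tup D v u) (dl B) \<in> Pc D Z" using rei_Pc[OF tup_hom[OF v u] dl_Pc[OF ZB(2)]] .
  have T: "truth Z \<in> Pc D Z" using truth_Pc[OF ZB(1)] .
  have "le D Z (truth Z) (mt Z (truth Z) (rei D (tup D u v) (dl B)))"
    using mt_glb[OF ZB(1) T uvP T le_refl[OF ZB(1) T] uv] .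
  then show ?thesis using le_trans[OF ZB(1) T mt_Pc[OF ZB(1) T uvP] vuP _ sym] by blast
qed

lemma eq_valid_rei_le:
  assumes u: "u \<in> hom D Z B" and v: "v \<in> hom D Z B" and \<beta>: "\<beta> \<in> Pc D B"
    and uv: "le D Z (truth Z) (rei D (tup D u v) (dl B))"
  shows "le D Z (rei D u \<beta>) (rei D v \<beta>)"
proof -
  have ZB: "Z \<in> Ob D" "B \<in> Ob D" using u hom_dom_Ob hom_cod_Ob by auto
  have u\<beta>: "rei D u \<beta> \<in> Pc D Z" using rei_Pc[OF u \<beta>] .
  have uvP: "rei D (tup D u v) (dl B) \<in> Pc D Z" using rei_Pc[OF tup_hom[OF u v] dl_Pc[OF ZB(2)]] .
  have "le D Z (rei D u \<beta>) (rei D (tup D u v) (dl B))"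
    using le_trans[OF ZB(1) u\<beta> truth_Pc[OF ZB(1)] uvP le_truth[OF ZB(1) u\<beta>] uv] .
  then have "le D Z (rei D u \<beta>) (mt Z (rei D u \<beta>) (rei D (tup D u v) (dl B)))"
    using mt_glb[OF ZB(1) u\<beta> uvP u\<beta> le_refl[OF ZB(1) u\<beta>]] by blast
  then show ?thesis
    using le_trans[OF ZB(1) u\<beta> mt_Pc[OF ZB(1) u\<beta> uvP] rei_Pc[OF v \<beta>] _ eq_subst[OF u v \<beta>]] by blast
qed

lemma eq_valid_rei_eq:
  assumes u: "u \<in> hom D Z B" and v: "v \<in> hom D Z B" and \<beta>: "\<beta> \<in> Pc D B"
    and uv: "le D Z (truth Z) (rei D (tup D u v) (dl B))"
  shows "rei D u \<beta> = rei D v \<beta>"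
  using le_antisym[OF hom_dom_Ob[OF u] rei_Pc[OF u \<beta>] rei_Pc[OF v \<beta>]]
    eq_valid_rei_le[OF u v \<beta> uv] eq_valid_rei_le[OF v u \<beta> eq_sym[OF u v uv]] by blast

lemma graph_eq:
  assumes c: "c \<in> hom D Q A"
  shows "graph D dl c = rei D (tup D (cmp D c (pr1 D Q A)) (pr2 D Q A)) (dl A)"
  unfolding graph_def hom_dom[OF c] hom_cod[OF c]
  using comp_id_left[OF pr2_hom[OF hom_dom_Ob[OF c] hom_cod_Ob[OF c]]] by simp

lemma graph_Pc:
  assumes c: "c \<in> hom D Q A"
  shows "graph D dl c \<in> Pc D (prd D Q A)"
proof -
  have QA: "Q \<in> Ob D" "A \<in> Ob D" using c hom_dom_Ob hom_cod_Ob by auto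
  have "tup D (cmp D c (pr1 D Q A)) (pr2 D Q A) \<in> hom D (prd D Q A) (prd D A A)"
    using QA c by (intro tup_hom comp_hom[OF pr1_hom] pr2_hom)
  from rei_Pc[OF this dl_Pc[OF QA(2)]] show ?thesis unfolding graph_eq[OF c] .
qed

lemma rei_tup_graph:
  assumes c: "c \<in> hom D Q A" and t1: "t1 \<in> hom D Z Q" and t2: "t2 \<in> hom D Z A"
  shows "rei D (tup D t1 t2) (graph D dl c) = rei D (tup D (cmp D c t1) t2) (dl A)"
proof -
  have QA: "Q \<in> Ob D" "A \<in> Ob D" using c hom_dom_Ob hom_cod_Ob by auto
  have q1: "pr1 D Q A \<in> hom D (prd D Q A) Q" and q2: "pr2 D Q A \<in> hom D (prd D Q A) A"
    using QA by (auto intro: pr1_hom pr2_hom)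
  have t: "tup D t1 t2 \<in> hom D Z (prd D Q A)" using t1 t2 by (rule tup_hom)
  have g: "tup D (cmp D c (pr1 D Q A)) (pr2 D Q A) \<in> hom D (prd D Q A) (prd D A A)"
    using comp_hom[OF q1 c] q2 by (rule tup_hom)
  have "cmp D (tup D (cmp D c (pr1 D Q A)) (pr2 D Q A)) (tup D t1 t2) = tup D (cmp D c t1) t2"
    using tup_comp[OF comp_hom[OF q1 c] q2 t] comp_assoc[OF t q1 c] pr1_tup[OF t1 t2]
      pr2_tup[OF t1 t2] by simp
  then show ?thesis unfolding graph_eq[OF c] using rei_comp[OF t g dl_Pc[OF QA(2)]] by simp
qed

lemma la_Pc: "left_adjoint D f L \<Longrightarrow> f \<in> hom D X Y \<Longrightarrow> \<alpha> \<in> Pc D X \<Longrightarrow> L \<alpha> \<in> Pc D Y"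
  unfolding left_adjoint_def hom_def by auto

lemma la_iff:
  "left_adjoint D f L \<Longrightarrow> f \<in> hom D X Y \<Longrightarrow> \<alpha> \<in> Pc D X \<Longrightarrow> \<beta> \<in> Pc D Y \<Longrightarrow>
   le D Y (L \<alpha>) \<beta> \<longleftrightarrow> le D X \<alpha> (rei D f \<beta>)"
  unfolding left_adjoint_def hom_def by auto

lemma la_unit:
  assumes "left_adjoint D f L" "f \<in> hom D X Y" "\<alpha> \<in> Pc D X"
  shows "le D X \<alpha> (rei D f (L \<alpha>))"
  using la_iff[OF assms la_Pc[OF assms]] le_refl[OF hom_cod_Ob[OF assms(2)] la_Pc[OF assms]] by blast

lemma la_mono:
  assumes L: "left_adjoint D f L" and f: "f \<in> hom D X Y"
    and \<alpha>: "\<alpha> \<in> Pc D X" "\<alpha>' \<in> Pc D X" "le D X \<alpha> \<alpha>'"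
  shows "le D Y (L \<alpha>) (L \<alpha>')"
proof -
  have L\<alpha>': "L \<alpha>' \<in> Pc D Y" using la_Pc[OF L f \<alpha>(2)] .
  have "le D X \<alpha> (rei D f (L \<alpha>'))"
    using le_trans[OF hom_dom_Ob[OF f] \<alpha>(1,2) rei_Pc[OF f L\<alpha>'] \<alpha>(3) la_unit[OF L f \<alpha>(2)]] .
  then show ?thesis using la_iff[OF L f \<alpha>(1) L\<alpha>'] by blast
qed

lemma la_section_le:
  assumes L: "left_adjoint D f L" and f: "f \<in> hom D X Y" and \<alpha>: "\<alpha> \<in> Pc D X"
    and s: "s \<in> hom D Y X" "cmp D f s = idm D Y"
  shows "le D Y (rei D s \<alpha>) (L \<alpha>)"
proof -
  have L\<alpha>: "L \<alpha> \<in> Pc D Y" using la_Pc[OF L f \<alpha>] .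
  from rei_mono[OF s(1) \<alpha> rei_Pc[OF f L\<alpha>] la_unit[OF L f \<alpha>]]
  show ?thesis using rei_comp[OF s(1) f L\<alpha>] s(2) rei_id[OF hom_cod_Ob[OF f] L\<alpha>] by simp
qed

lemma la_beck_chevalley_le:
  assumes Lf: "left_adjoint D f Lf" and Lg: "left_adjoint D g Lg"
    and h: "h \<in> hom D X Y" and g: "g \<in> hom D W X" and f: "f \<in> hom D Z Y" and k: "k \<in> hom D W Z"
    and square: "cmp D h g = cmp D f k" and \<gamma>: "\<gamma> \<in> Pc D Z"
  shows "le D X (Lg (rei D k \<gamma>)) (rei D h (Lf \<gamma>))"
proof -
  have Lf\<gamma>: "Lf \<gamma> \<in> Pc D Y" using la_Pc[OF Lf f \<gamma>] .
  have "le D W (rei D k \<gamma>) (rei D k (rei D f (Lf \<gamma>)))"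
    using rei_mono[OF k \<gamma> rei_Pc[OF f Lf\<gamma>] la_unit[OF Lf f \<gamma>]] .
  also have "rei D k (rei D f (Lf \<gamma>)) = rei D g (rei D h (Lf \<gamma>))"
    using rei_comp[OF k f Lf\<gamma>] rei_comp[OF g h Lf\<gamma>] square by simp
  finally show ?thesis using la_iff[OF Lg g rei_Pc[OF k \<gamma>] rei_Pc[OF h Lf\<gamma>]] by blast
qed

lemma la_frobenius_le:
  assumes L: "left_adjoint D f L" and f: "f \<in> hom D Z Y" and \<alpha>: "\<alpha> \<in> Pc D Z" and \<beta>: "\<beta> \<in> Pc D Y"
  shows "le D Y (L (mt Z \<alpha> (rei D f \<beta>))) (mt Y \<beta> (L \<alpha>))"
proof -
  have ZY: "Z \<in> Ob D" "Y \<in> Ob D" using f hom_dom_Ob hom_cod_Ob by auto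
  have f\<beta>: "rei D f \<beta> \<in> Pc D Z" using rei_Pc[OF f \<beta>] .
  have m: "mt Z \<alpha> (rei D f \<beta>) \<in> Pc D Z" using mt_Pc[OF ZY(1) \<alpha> f\<beta>] .
  have "le D Y (L (mt Z \<alpha> (rei D f \<beta>))) \<beta>"
    using la_iff[OF L f m \<beta>] mt_le2[OF ZY(1) \<alpha> f\<beta>] by blast
  moreover have "le D Y (L (mt Z \<alpha> (rei D f \<beta>))) (L \<alpha>)"
    using la_mono[OF L f m \<alpha> mt_le1[OF ZY(1) \<alpha> f\<beta>]] .
  ultimately show ?thesis using mt_glb[OF ZY(2) \<beta> la_Pc[OF L f \<alpha>] la_Pc[OF L f m]] by blast
qed

text \<open>Reindexing along the section \<open>\<langle>g, id\<rangle>\<close> of the projection turns the graph of \<open>c\<close>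
  into \<open>\<langle>c g, id\<rangle>\<^sup>* dl = diag\<^sup>* dl\<close>.\<close>

lemma truth_le_la_graph:
  assumes L: "left_adjoint D (pr2 D Q A) L" and c: "c \<in> hom D Q A"
    and g: "g \<in> hom D A Q" "cmp D c g = idm D A"
  shows "le D A (truth A) (L (graph D dl c))"
proof -
  have QA: "Q \<in> Ob D" "A \<in> Ob D" using c hom_dom_Ob hom_cod_Ob by auto
  have i: "idm D A \<in> hom D A A" using id_hom[OF QA(2)] .
  have "le D A (rei D (tup D g (idm D A)) (graph D dl c)) (L (graph D dl c))"
    using la_section_le[OF L pr2_hom[OF QA] graph_Pc[OF c] tup_hom[OF g(1) i] pr2_tup[OF g(1) i]] .
  moreover have "rei D (tup D g (idm D A)) (graph D dl c) = truth A"
    unfolding rei_tup_graph[OF c g(1) i] g(2) truth_def diag_def ..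
  ultimately show ?thesis by simp
qed

end

locale eaco_doctrine = elementary_doctrine D mt dl
  for D :: "('o,'m,'p,'z) doctrine_scheme" and mt dl +
  fixes bt :: "'o \<Rightarrow> 'p" and co :: "'o \<Rightarrow> 'p \<Rightarrow> 'o" and cc :: "'o \<Rightarrow> 'p \<Rightarrow> 'm"
    and Sg1 Sg2 :: "'o \<Rightarrow> 'o \<Rightarrow> 'p \<Rightarrow> 'p" and e1 e2 :: "'o \<Rightarrow> 'o \<Rightarrow> 'p \<Rightarrow> 'm"
  assumes cocomp: "cocomp_with D bt co cc"
    and full: "full_cocomp D co cc"
    and choice: "AC_with D Sg1 Sg2 e1 e2"
    and eaco_condition:
      "f \<in> hom D X A \<Longrightarrow> \<alpha> \<in> Pc D A \<Longrightarrow>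
       \<not> stable_initial D (co A \<alpha>) \<Longrightarrow> \<not> stable_initial D (co X (rei D f \<alpha>)) \<Longrightarrow>
       rei D f (rei D (tup D (e2 (co A \<alpha>) A (graph D dl (cc A \<alpha>))) (idm D A)) (graph D dl (cc A \<alpha>)))
       = rei D (tup D (e2 (co X (rei D f \<alpha>)) X (graph D dl (cc X (rei D f \<alpha>)))) (idm D X))
           (graph D dl (cc X (rei D f \<alpha>)))"
begin

lemma bot_Pc: "A \<in> Ob D \<Longrightarrow> bt A \<in> Pc D A"
  using cocomp unfolding cocomp_with_def by blast

lemma bot_le: "A \<in> Ob D \<Longrightarrow> a \<in> Pc D A \<Longrightarrow> le D A (bt A) a"
  using cocomp unfolding cocomp_with_def by blast

lemma cc_hom: "A \<in> Ob D \<Longrightarrow> \<alpha> \<in> Pc D A \<Longrightarrow> cc A \<alpha> \<in> hom D (co A \<alpha>) A"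
  using cocomp unfolding cocomp_with_def by blast

lemma rei_cc: "A \<in> Ob D \<Longrightarrow> \<alpha> \<in> Pc D A \<Longrightarrow> rei D (cc A \<alpha>) \<alpha> = bt (co A \<alpha>)"
  using cocomp unfolding cocomp_with_def by blast

lemma cc_factor:
  assumes "A \<in> Ob D" "\<alpha> \<in> Pc D A" "f \<in> hom D Y A" "rei D f \<alpha> = bt Y"
  obtains g where "g \<in> hom D Y (co A \<alpha>)" "cmp D (cc A \<alpha>) g = f"
  using cocomp assms hom_dom_Ob[OF assms(3)] unfolding cocomp_with_def by blast

lemma cc_full:
  "A \<in> Ob D \<Longrightarrow> \<alpha> \<in> Pc D A \<Longrightarrow> \<beta> \<in> Pc D A \<Longrightarrow> g \<in> hom D (co A \<beta>) (co A \<alpha>) \<Longrightarrow>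
   cmp D (cc A \<alpha>) g = cc A \<beta> \<Longrightarrow> le D A \<alpha> \<beta>"
  using full unfolding full_cocomp_def by blast

lemma choice_at:
  assumes "A \<in> Ob D" "\<not> stable_initial D A" "\<Gamma> \<in> Ob D"
  shows "left_adjoint D (pr1 D \<Gamma> A) (Sg1 \<Gamma> A)"
    and "\<psi> \<in> Pc D (prd D \<Gamma> A) \<Longrightarrow> e1 \<Gamma> A \<psi> \<in> hom D \<Gamma> A"
    and "\<psi> \<in> Pc D (prd D \<Gamma> A) \<Longrightarrow> Sg1 \<Gamma> A \<psi> = rei D (tup D (idm D \<Gamma>) (e1 \<Gamma> A \<psi>)) \<psi>"
    and "left_adjoint D (pr2 D A \<Gamma>) (Sg2 A \<Gamma>)"
    and "\<psi> \<in> Pc D (prd D A \<Gamma>) \<Longrightarrow> e2 A \<Gamma> \<psi> \<in> hom D \<Gamma> A"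
    and "\<psi> \<in> Pc D (prd D A \<Gamma>) \<Longrightarrow> Sg2 A \<Gamma> \<psi> = rei D (tup D (e2 A \<Gamma> \<psi>) (idm D \<Gamma>)) \<psi>"
  using choice assms unfolding AC_with_def by blast+

text \<open>Over an object with a map into a stable initial object, \<open>co W (bt W)\<close> is initial, so it
  factors through every \<open>cc W a\<close>; fullness then forces \<open>a \<le> bt W\<close>.\<close>

lemma maps_to_initial_Pc_bot:
  assumes W: "maps_to_initial W" and a: "a \<in> Pc D W"
  shows "a = bt W"
proof -
  obtain Z w where "stable_initial D Z" "w \<in> hom D W Z" using W unfolding maps_to_initial_def by blast
  then have W_Ob: "W \<in> Ob D" by (auto intro: hom_dom_Ob)
  have b: "bt W \<in> Pc D W" using bot_Pc[OF W_Ob] .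
  have c: "cc W a \<in> hom D (co W a) W" using cc_hom[OF W_Ob a] .
  have cb: "cc W (bt W) \<in> hom D (co W (bt W)) W" using cc_hom[OF W_Ob b] .
  have ini: "\<exists>!u. u \<in> hom D (co W (bt W)) Y" if "Y \<in> Ob D" for Y
    using maps_to_initial_unique_hom[OF maps_to_initial_comp[OF cb W] that] .
  obtain g where g: "g \<in> hom D (co W (bt W)) (co W a)"
    using ini[OF hom_dom_Ob[OF c]] by blast
  have "cmp D (cc W a) g = cc W (bt W)" using ini[OF W_Ob] comp_hom[OF g c] cb by blast
  then have "le D W a (bt W)" using cc_full[OF W_Ob a b g] by blast
  then show ?thesis using le_antisym[OF W_Ob a b _ bot_le[OF W_Ob a]] by blast
qed

lemma not_stable_initial_co:
  assumes h: "h \<in> hom D \<Gamma> A" and \<alpha>: "\<alpha> \<in> Pc D A" and h\<alpha>: "rei D h \<alpha> = bt \<Gamma>"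
    and \<Gamma>: "\<not> maps_to_initial \<Gamma>"
  shows "\<not> stable_initial D (co A \<alpha>)"
proof
  assume "stable_initial D (co A \<alpha>)"
  moreover obtain g where "g \<in> hom D \<Gamma> (co A \<alpha>)" using cc_factor[OF hom_cod_Ob[OF h] \<alpha> h h\<alpha>] .
  ultimately show False
    using \<Gamma> maps_to_initial_comp stable_initial_maps_to_initial by blast
qed

text \<open>The eaco condition for \<open>pr2 : Y = X \<times> \<Gamma> \<rightarrow> \<Gamma>\<close> and \<open>bt \<Gamma>\<close>: its left-hand side is
  \<open>pr2\<^sup>*\<close> of \<open>\<Sigma>(graph (cc \<Gamma> (bt \<Gamma>)))\<close>, which is \<open>truth\<close> since \<open>cc \<Gamma> (bt \<Gamma>)\<close> is split
  (\<open>\<Gamma>\<close> itself satisfies \<open>id\<^sup>* (bt \<Gamma>) = bt \<Gamma>\<close>), while its right-hand side is \<open>\<langle>cc Y \<gamma> \<circ> e, id\<rangle>\<^sup>* dl\<close>.\<close>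

lemma cc_choice_internally_id:
  fixes X \<Gamma> :: 'o
  defines "Y \<equiv> prd D X \<Gamma>" and "\<gamma> \<equiv> rei D (pr2 D X \<Gamma>) (bt \<Gamma>)"
  assumes X: "X \<in> Ob D" and \<Gamma>: "\<Gamma> \<in> Ob D" and n\<Gamma>: "\<not> maps_to_initial \<Gamma>"
    and ns2: "\<not> stable_initial D (co Y \<gamma>)"
  shows "le D Y (truth Y)
    (rei D (tup D (cmp D (cc Y \<gamma>) (e2 (co Y \<gamma>) Y (graph D dl (cc Y \<gamma>)))) (idm D Y)) (dl Y))"
proof -
  define c1 where "c1 = cc \<Gamma> (bt \<Gamma>)"
  define O1 where "O1 = co \<Gamma> (bt \<Gamma>)"
  define M where "M = Sg2 O1 \<Gamma> (graph D dl c1)"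
  have Y: "Y \<in> Ob D" unfolding Y_def using X \<Gamma> by (rule prd_Ob)
  have q: "pr2 D X \<Gamma> \<in> hom D Y \<Gamma>" unfolding Y_def using X \<Gamma> by (rule pr2_hom)
  have i\<Gamma>: "idm D \<Gamma> \<in> hom D \<Gamma> \<Gamma>" using id_hom[OF \<Gamma>] .
  have bot\<Gamma>: "bt \<Gamma> \<in> Pc D \<Gamma>" using bot_Pc[OF \<Gamma>] .
  have \<gamma>: "\<gamma> \<in> Pc D Y" unfolding \<gamma>_def using rei_Pc[OF q bot\<Gamma>] .
  have c1: "c1 \<in> hom D O1 \<Gamma>" unfolding c1_def O1_def using cc_hom[OF \<Gamma> bot\<Gamma>] .
  have c2: "cc Y \<gamma> \<in> hom D (co Y \<gamma>) Y" using cc_hom[OF Y \<gamma>] .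
  note O1 = hom_dom_Ob[OF c1]
  obtain g1 where g1: "g1 \<in> hom D \<Gamma> O1" "cmp D c1 g1 = idm D \<Gamma>"
    using cc_factor[OF \<Gamma> bot\<Gamma> i\<Gamma> rei_id[OF \<Gamma> bot\<Gamma>]] unfolding c1_def O1_def .
  have ns1: "\<not> stable_initial D O1"
    unfolding O1_def using not_stable_initial_co[OF i\<Gamma> bot\<Gamma> rei_id[OF \<Gamma> bot\<Gamma>] n\<Gamma>] .
  note \<Sigma> = choice_at(4)[OF O1 ns1 \<Gamma>]
  have M: "M \<in> Pc D \<Gamma>" unfolding M_def using la_Pc[OF \<Sigma> pr2_hom[OF O1 \<Gamma>] graph_Pc[OF c1]] .
  have "le D \<Gamma> (truth \<Gamma>) M" unfolding M_def using truth_le_la_graph[OF \<Sigma> c1 g1] .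
  from rei_mono[OF q truth_Pc[OF \<Gamma>] M this]
  have "le D Y (truth Y) (rei D (pr2 D X \<Gamma>) M)"
    using le_trans[OF Y truth_Pc[OF Y] rei_Pc[OF q truth_Pc[OF \<Gamma>]] rei_Pc[OF q M]]
      le_rei_pr2_truth[OF X \<Gamma> truth_Pc[OF Y, unfolded Y_def]] unfolding Y_def by blast
  moreover have "rei D (pr2 D X \<Gamma>) M
      = rei D (tup D (cmp D (cc Y \<gamma>) (e2 (co Y \<gamma>) Y (graph D dl (cc Y \<gamma>)))) (idm D Y)) (dl Y)"
    using eaco_condition[OF q bot\<Gamma>, folded \<gamma>_def c1_def O1_def, OF ns1 ns2]
      choice_at(6)[OF O1 ns1 \<Gamma> graph_Pc[OF c1]]
      rei_tup_graph[OF c2 choice_at(5)[OF hom_dom_Ob[OF c2] ns2 Y graph_Pc[OF c2]] id_hom[OF Y]]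
    unfolding M_def by simp
  ultimately show ?thesis by simp
qed

text \<open>With \<open>\<gamma> = pr2\<^sup>* (bt \<Gamma>)\<close> and \<open>u = cc Y \<gamma> \<circ> e\<close> internally the identity,
  \<open>\<gamma> = u\<^sup>* \<gamma> = e\<^sup>* (bt (co Y \<gamma>)) \<le> u\<^sup>* (bt Y) = bt Y\<close>.\<close>

lemma rei_pr2_bot:
  assumes X: "X \<in> Ob D" and \<Gamma>: "\<Gamma> \<in> Ob D"
    and nX: "\<not> maps_to_initial X" and n\<Gamma>: "\<not> maps_to_initial \<Gamma>"
  shows "rei D (pr2 D X \<Gamma>) (bt \<Gamma>) = bt (prd D X \<Gamma>)"
proof -
  define Y where "Y = prd D X \<Gamma>"
  define \<gamma> where "\<gamma> = rei D (pr2 D X \<Gamma>) (bt \<Gamma>)"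
  have Y: "Y \<in> Ob D" unfolding Y_def using X \<Gamma> by (rule prd_Ob)
  have q: "pr2 D X \<Gamma> \<in> hom D Y \<Gamma>" unfolding Y_def using X \<Gamma> by (rule pr2_hom)
  have i\<Gamma>: "idm D \<Gamma> \<in> hom D \<Gamma> \<Gamma>" and iY: "idm D Y \<in> hom D Y Y" using id_hom \<Gamma> Y by auto
  have bot\<Gamma>: "bt \<Gamma> \<in> Pc D \<Gamma>" and botY: "bt Y \<in> Pc D Y" using bot_Pc \<Gamma> Y by auto
  have \<gamma>P: "\<gamma> \<in> Pc D Y" unfolding \<gamma>_def using rei_Pc[OF q bot\<Gamma>] .
  have c: "cc Y \<gamma> \<in> hom D (co Y \<gamma>) Y" using cc_hom[OF Y \<gamma>P] .
  note O2 = hom_dom_Ob[OF c]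
  txt \<open>Any map \<open>\<Gamma> \<rightarrow> X\<close> gives a section of \<open>pr2\<close> killing \<open>\<gamma>\<close>; the choice witness provides one.\<close>
  have X_ns: "\<not> stable_initial D X" using nX stable_initial_maps_to_initial by blast
  have e: "e2 X \<Gamma> (bt Y) \<in> hom D \<Gamma> X" using choice_at(5)[OF X X_ns \<Gamma>] botY unfolding Y_def .
  have s: "tup D (e2 X \<Gamma> (bt Y)) (idm D \<Gamma>) \<in> hom D \<Gamma> Y"
    using tup_hom[OF e i\<Gamma>] by (simp add: Y_def)
  have "rei D (tup D (e2 X \<Gamma> (bt Y)) (idm D \<Gamma>)) \<gamma> = bt \<Gamma>"
    unfolding \<gamma>_def using rei_comp[OF s q bot\<Gamma>] pr2_tup[OF e i\<Gamma>] rei_id[OF \<Gamma> bot\<Gamma>] by simp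
  then have ns2: "\<not> stable_initial D (co Y \<gamma>)" using not_stable_initial_co[OF s \<gamma>P _ n\<Gamma>] by blast
  define e' where "e' = e2 (co Y \<gamma>) Y (graph D dl (cc Y \<gamma>))"
  define u where "u = cmp D (cc Y \<gamma>) e'"
  have e': "e' \<in> hom D Y (co Y \<gamma>)" unfolding e'_def using choice_at(5)[OF O2 ns2 Y] graph_Pc[OF c] .
  have u: "u \<in> hom D Y Y" unfolding u_def using e' c by (rule comp_hom)
  have u_id: "rei D u \<beta> = \<beta>" if "\<beta> \<in> Pc D Y" for \<beta>
    using eq_valid_rei_eq[OF u iY that] cc_choice_internally_id[OF X \<Gamma> n\<Gamma> ns2[unfolded Y_def \<gamma>_def]]
      rei_id[OF Y that] unfolding u_def e'_def Y_def \<gamma>_def by simp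
  have "\<gamma> = rei D e' (bt (co Y \<gamma>))"
    using u_id[OF \<gamma>P] rei_comp[OF e' c \<gamma>P] rei_cc[OF Y \<gamma>P] unfolding u_def by simp
  moreover have "le D Y (rei D e' (bt (co Y \<gamma>))) (rei D e' (rei D (cc Y \<gamma>) (bt Y)))"
    using rei_mono[OF e' bot_Pc[OF O2] rei_Pc[OF c botY] bot_le[OF O2 rei_Pc[OF c botY]]] .
  moreover have "rei D e' (rei D (cc Y \<gamma>) (bt Y)) = bt Y"
    using u_id[OF botY] rei_comp[OF e' c botY] unfolding u_def by simp
  ultimately have "le D Y \<gamma> (bt Y)" by simp
  then show ?thesis
    using le_antisym[OF Y \<gamma>P botY _ bot_le[OF Y \<gamma>P]] unfolding \<gamma>_def Y_def by blast
qed

lemma rei_bot: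
  assumes h: "h \<in> hom D X \<Gamma>"
  shows "rei D h (bt \<Gamma>) = bt X"
proof (cases "maps_to_initial X")
  case True
  then show ?thesis using maps_to_initial_Pc_bot rei_Pc[OF h bot_Pc[OF hom_cod_Ob[OF h]]] by blast
next
  case False
  have X: "X \<in> Ob D" and \<Gamma>: "\<Gamma> \<in> Ob D" using h hom_dom_Ob hom_cod_Ob by auto
  have n\<Gamma>: "\<not> maps_to_initial \<Gamma>" using False maps_to_initial_comp[OF h] by blast
  have i: "idm D X \<in> hom D X X" using id_hom[OF X] .
  have t: "tup D (idm D X) h \<in> hom D X (prd D X \<Gamma>)" using i h by (rule tup_hom)
  have XY: "prd D X \<Gamma> \<in> Ob D" using X \<Gamma> by (rule prd_Ob)
  have q1: "pr1 D X \<Gamma> \<in> hom D (prd D X \<Gamma>) X" and q2: "pr2 D X \<Gamma> \<in> hom D (prd D X \<Gamma>) \<Gamma>"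
    using X \<Gamma> by (auto intro: pr1_hom pr2_hom)
  have botX: "bt X \<in> Pc D X" and bot\<Gamma>: "bt \<Gamma> \<in> Pc D \<Gamma>" using bot_Pc X \<Gamma> by auto
  have "rei D h (bt \<Gamma>) = rei D (tup D (idm D X) h) (bt (prd D X \<Gamma>))"
    using rei_comp[OF t q2 bot\<Gamma>] pr2_tup[OF i h] rei_pr2_bot[OF X \<Gamma> False n\<Gamma>] by simp
  also have "le D X \<dots> (rei D (tup D (idm D X) h) (rei D (pr1 D X \<Gamma>) (bt X)))"
    using rei_mono[OF t bot_Pc[OF XY] rei_Pc[OF q1 botX] bot_le[OF XY rei_Pc[OF q1 botX]]] .
  also have "rei D (tup D (idm D X) h) (rei D (pr1 D X \<Gamma>) (bt X)) = bt X"
    using rei_comp[OF t q1 botX] pr1_tup[OF i h] rei_id[OF X botX] by simp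
  finally have "le D X (rei D h (bt \<Gamma>)) (bt X)" .
  then show ?thesis using le_antisym[OF X rei_Pc[OF h bot\<Gamma>] botX _ bot_le[OF X rei_Pc[OF h bot\<Gamma>]]] by blast
qed

definition sectional_adjoint :: "'m \<Rightarrow> ('p \<Rightarrow> 'p) \<Rightarrow> bool" where
  "sectional_adjoint f L \<longleftrightarrow> left_adjoint D f L \<and>
     (\<forall>\<psi>\<in>Pc D (dom D f). L \<psi> = bt (cod D f) \<or>
        (\<exists>s\<in>hom D (cod D f) (dom D f). cmp D f s = idm D (cod D f) \<and> L \<psi> = rei D s \<psi>))"

lemma sectional_adjointE:
  assumes "sectional_adjoint f L" "f \<in> hom D Z Y" "\<psi> \<in> Pc D Z"
  obtains "L \<psi> = bt Y"
    | s where "s \<in> hom D Y Z" "cmp D f s = idm D Y" "L \<psi> = rei D s \<psi>"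
  using assms unfolding sectional_adjoint_def hom_def by blast

lemma sectional_adjoint_beck_chevalley:
  assumes Lf: "sectional_adjoint f Lf" and Lg: "left_adjoint D g Lg"
    and pb: "is_pullback D h g f k" and \<gamma>: "\<gamma> \<in> Pc D (dom D f)"
  shows "rei D h (Lf \<gamma>) = Lg (rei D k \<gamma>)"
proof -
  let ?X = "cod D g" and ?Y = "cod D f"
  have h: "h \<in> hom D ?X ?Y" and g: "g \<in> hom D (dom D g) ?X" and f: "f \<in> hom D (dom D f) ?Y"
    and k: "k \<in> hom D (dom D g) (dom D f)" and square: "cmp D h g = cmp D f k"
    using pb unfolding is_pullback_def hom_def by auto
  have X: "?X \<in> Ob D" using h by (rule hom_dom_Ob)
  have Lf\<gamma>: "Lf \<gamma> \<in> Pc D ?Y" using la_Pc[OF _ f \<gamma>] Lf unfolding sectional_adjoint_def by blast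
  have k\<gamma>: "rei D k \<gamma> \<in> Pc D (dom D g)" using rei_Pc[OF k \<gamma>] .
  have Lgk\<gamma>: "Lg (rei D k \<gamma>) \<in> Pc D ?X" using la_Pc[OF Lg g k\<gamma>] .
  have "le D ?X (rei D h (Lf \<gamma>)) (Lg (rei D k \<gamma>))"
  proof (cases rule: sectional_adjointE[OF Lf f \<gamma>])
    case 1
    then show ?thesis using rei_bot[OF h] bot_le[OF X Lgk\<gamma>] by simp
  next
    case (2 s)
    obtain w where w: "w \<in> hom D ?X (dom D g)" "cmp D g w = idm D ?X" "cmp D k w = cmp D s h"
      using pullback_section[OF pb 2(1,2)] .
    have "rei D h (Lf \<gamma>) = rei D w (rei D k \<gamma>)"
      using 2(3) rei_comp[OF h 2(1) \<gamma>] rei_comp[OF w(1) k \<gamma>] w(3) by simp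
    then show ?thesis using la_section_le[OF Lg g k\<gamma> w(1,2)] by simp
  qed
  moreover have "le D ?X (Lg (rei D k \<gamma>)) (rei D h (Lf \<gamma>))"
    using la_beck_chevalley_le[OF _ Lg h g f k square \<gamma>] Lf unfolding sectional_adjoint_def by blast
  ultimately show ?thesis using le_antisym[OF X rei_Pc[OF h Lf\<gamma>] Lgk\<gamma>] by blast
qed

lemma sectional_adjoint_frobenius:
  assumes L: "sectional_adjoint f L" and f: "f \<in> hom D Z Y"
    and \<alpha>: "\<alpha> \<in> Pc D Z" and \<beta>: "\<beta> \<in> Pc D Y"
  shows "L (mt Z \<alpha> (rei D f \<beta>)) = mt Y \<beta> (L \<alpha>)"
proof -
  have la: "left_adjoint D f L" using L unfolding sectional_adjoint_def by blast
  have Z: "Z \<in> Ob D" and Y: "Y \<in> Ob D" using f hom_dom_Ob hom_cod_Ob by auto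
  have f\<beta>: "rei D f \<beta> \<in> Pc D Z" using rei_Pc[OF f \<beta>] .
  have m: "mt Z \<alpha> (rei D f \<beta>) \<in> Pc D Z" using mt_Pc[OF Z \<alpha> f\<beta>] .
  have Lm: "L (mt Z \<alpha> (rei D f \<beta>)) \<in> Pc D Y" using la_Pc[OF la f m] .
  have L\<alpha>: "L \<alpha> \<in> Pc D Y" using la_Pc[OF la f \<alpha>] .
  have \<beta>L: "mt Y \<beta> (L \<alpha>) \<in> Pc D Y" using mt_Pc[OF Y \<beta> L\<alpha>] .
  have "le D Y (mt Y \<beta> (L \<alpha>)) (L (mt Z \<alpha> (rei D f \<beta>)))"
  proof (cases rule: sectional_adjointE[OF L f \<alpha>])
    case 1
    then have "le D Y (mt Y \<beta> (L \<alpha>)) (bt Y)" using mt_le2[OF Y \<beta> L\<alpha>] by simp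
    then show ?thesis using le_trans[OF Y \<beta>L bot_Pc[OF Y] Lm _ bot_le[OF Y Lm]] by blast
  next
    case (2 s)
    have m': "mt Z (rei D f \<beta>) \<alpha> \<in> Pc D Z" using mt_Pc[OF Z f\<beta> \<alpha>] .
    have "mt Y \<beta> (L \<alpha>) = rei D s (mt Z (rei D f \<beta>) \<alpha>)"
      using rei_mt[OF 2(1) f\<beta> \<alpha>] rei_comp[OF 2(1) f \<beta>] 2(2,3) rei_id[OF Y \<beta>] by simp
    also have "le D Y \<dots> (L (mt Z (rei D f \<beta>) \<alpha>))" using la_section_le[OF la f m' 2(1,2)] .
    also have "mt Z (rei D f \<beta>) \<alpha> = mt Z \<alpha> (rei D f \<beta>)"
      using le_antisym[OF Z m' m] mt_glb[OF Z \<alpha> f\<beta> m' mt_le2[OF Z f\<beta> \<alpha>] mt_le1[OF Z f\<beta> \<alpha>]]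
        mt_glb[OF Z f\<beta> \<alpha> m mt_le2[OF Z \<alpha> f\<beta>] mt_le1[OF Z \<alpha> f\<beta>]] by blast
    finally show ?thesis .
  qed
  then show ?thesis using le_antisym[OF Y Lm \<beta>L la_frobenius_le[OF la f \<alpha> \<beta>]] by blast
qed

lemma projection_sectional_adjoint:
  assumes "is_proj D f"
  shows "\<exists>L. sectional_adjoint f L"
proof -
  obtain A B where A: "A \<in> Ob D" and B: "B \<in> Ob D" and f: "f = pr1 D A B \<or> f = pr2 D A B"
    using assms unfolding is_proj_def by blast
  have f_hom: "f \<in> hom D (prd D A B) (cod D f)"
    using f pr1_hom[OF A B] pr2_hom[OF A B] hom_cod by auto
  consider (trivial) "maps_to_initial (prd D A B)"
    | (choice) "\<not> stable_initial D A" "\<not> stable_initial D B"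
    using maps_to_initial_comp[OF pr1_hom[OF A B]] maps_to_initial_comp[OF pr2_hom[OF A B]]
      stable_initial_maps_to_initial by blast
  then show ?thesis
  proof cases
    case trivial
    have "left_adjoint D f (\<lambda>_. bt (cod D f))"
      unfolding left_adjoint_def hom_dom[OF f_hom]
      using bot_Pc[OF hom_cod_Ob[OF f_hom]] bot_le[OF hom_cod_Ob[OF f_hom]]
        bot_le[OF prd_Ob[OF A B] rei_Pc[OF f_hom]] maps_to_initial_Pc_bot[OF trivial] by auto
    then show ?thesis unfolding sectional_adjoint_def by blast
  next
    case choice
    have iA: "idm D A \<in> hom D A A" and iB: "idm D B \<in> hom D B B" using id_hom A B by auto
    from f show ?thesis
    proof
      assume f1: "f = pr1 D A B"
      have "sectional_adjoint f (Sg1 A B)"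
        unfolding sectional_adjoint_def f1 hom_dom[OF pr1_hom[OF A B]] hom_cod[OF pr1_hom[OF A B]]
        using choice_at[OF B choice(2) A] tup_hom[OF iA] pr1_tup[OF iA] by blast
      then show ?thesis by blast
    next
      assume f2: "f = pr2 D A B"
      have "sectional_adjoint f (Sg2 A B)"
        unfolding sectional_adjoint_def f2 hom_dom[OF pr2_hom[OF A B]] hom_cod[OF pr2_hom[OF A B]]
        using choice_at[OF A choice(1) B] tup_hom[OF _ iB] pr2_tup[OF _ iB] by blast
      then show ?thesis by blast
    qed
  qed
qed

lemma existential: "existential D"
proof -
  define Sg where "Sg f = (SOME L. sectional_adjoint f L)" for f
  have Sg: "sectional_adjoint f (Sg f)" if "is_proj D f" for f
    unfolding Sg_def using projection_sectional_adjoint[OF that] by (rule someI_ex)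
  have f_hom: "f \<in> hom D (dom D f) (cod D f)" if "is_proj D f" for f
    using that pr1_hom pr2_hom unfolding is_proj_def hom_def by blast
  show ?thesis
    unfolding existential_def
  proof (intro exI conjI allI impI ballI)
    show "primary_with D mt" by (rule primary)
    show "left_adjoint D f (Sg f)" if "is_proj D f" for f
      using Sg[OF that] unfolding sectional_adjoint_def by blast
    show "rei D h (Sg f \<gamma>) = Sg g (rei D k \<gamma>)"
      if "is_proj D f \<and> is_proj D g \<and> is_pullback D h g f k" "\<gamma> \<in> Pc D (dom D f)" for f g h k \<gamma>
      using that Sg sectional_adjoint_beck_chevalley unfolding sectional_adjoint_def by blast
    show "Sg f (mt (dom D f) \<alpha> (rei D f \<beta>)) = mt (cod D f) \<beta> (Sg f \<alpha>)"
      if "is_proj D f" "\<alpha> \<in> Pc D (dom D f)" "\<beta> \<in> Pc D (cod D f)" for f \<alpha> \<beta>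
      using sectional_adjoint_frobenius[OF Sg f_hom] that by blast
  qed
qed

end

lemma eacoE:
  assumes "eaco D"
  obtains mt dl bt co cc Sg1 Sg2 e1 e2 where "eaco_doctrine D mt dl bt co cc Sg1 Sg2 e1 e2"
proof -
  from assms obtain mt dl bt co cc Sg1 Sg2 e1 e2 where
    el: "elementary_with D mt dl" and rest: "cocomp_with D bt co cc" "full_cocomp D co cc"
      "AC_with D Sg1 Sg2 e1 e2"
    and condition: "\<forall>X\<in>Ob D. \<forall>A\<in>Ob D. \<forall>f\<in>hom D X A. \<forall>\<alpha>\<in>Pc D A.
        \<not> stable_initial D (co A \<alpha>) \<and> \<not> stable_initial D (co X (rei D f \<alpha>)) \<longrightarrow>
        rei D f (rei D (tup D (e2 (co A \<alpha>) A (graph D dl (cc A \<alpha>))) (idm D A)) (graph D dl (cc A \<alpha>)))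
        = rei D (tup D (e2 (co X (rei D f \<alpha>)) X (graph D dl (cc X (rei D f \<alpha>)))) (idm D X))
            (graph D dl (cc X (rei D f \<alpha>)))"
    unfolding eaco_def Let_def by blast
  have fp: "product_category D"
    using el unfolding product_category_def elementary_with_def primary_with_def doctrine_def by blast
  have "eaco_doctrine D mt dl bt co cc Sg1 Sg2 e1 e2"
  proof (intro eaco_doctrine.intro elementary_doctrine.intro eaco_doctrine_axioms.intro
      elementary_doctrine_axioms.intro fp el rest)
    fix f X A \<alpha>
    assume "f \<in> hom D X A" "\<alpha> \<in> Pc D A" "\<not> stable_initial D (co A \<alpha>)"
      "\<not> stable_initial D (co X (rei D f \<alpha>))"
    then show "rei D f (rei D (tup D (e2 (co A \<alpha>) A (graph D dl (cc A \<alpha>))) (idm D A)) (graph D dl (cc A \<alpha>)))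
        = rei D (tup D (e2 (co X (rei D f \<alpha>)) X (graph D dl (cc X (rei D f \<alpha>)))) (idm D X))
            (graph D dl (cc X (rei D f \<alpha>)))"
      using condition product_category.hom_dom_Ob[OF fp] product_category.hom_cod_Ob[OF fp] by blast
  qed
  then show ?thesis by (rule that)
qed

theorem mainTheorem11:
  fixes D :: "('o,'m,'p) doctrine"
  assumes "eaco D"
  shows "existential D"
proof -
  from assms obtain mt dl bt co cc Sg1 Sg2 e1 e2
    where "eaco_doctrine D mt dl bt co cc Sg1 Sg2 e1 e2" by (rule eacoE)
  then show ?thesis by (rule eaco_doctrine.existential)
qed

end
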